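(* Let $A=\{1,\dots,k\}$ and $M\le A^A$ a monoid. If a binary operation $h:A^2\to A$ satisfies $h\in(\overline{M})^{*}$, in particular if $h\in M^{*}$, then the unary map $x\mapsto h(x,x)$ belongs to $\overline{M}$.
   Context: A translation of a binary $h$ is a unary map $x\mapsto h(a,x)$ or $x\mapsto h(x,a)$ for some fixed $a\in A$; more generally for $n$-ary $f$ translations are $x\mapsto f(a_1,\dots,a_{i-1},x,a_{i+1},\dots,a_n)$; $\mathrm{trl}(f)$ is the set of translations ($\{f\}$ for unary $f$), and $N^*:=\{f\mid\mathrm{trl}(f)\subseteq N\}$ for $N\subseteq A^A$. The u-closure $\overline M$ is the intersection of all monoids $N$ with $M\subseteq N\le A^A$ such that $N^*$ is a clone. *)

theory Defs
  imports Main "HOL-Library.FuncSet"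
begin

text \<open>An n-ary operation (n \<ge> 1) is
  represented by a pair (n, f) with f :: nat list \<Rightarrow> nat defined on lists of
  length n with entries in A and equal to undefined elsewhere.\<close>

definition base :: "nat \<Rightarrow> nat set" where
  "base k = {1..k}"

definition unary_maps :: "nat \<Rightarrow> (nat \<Rightarrow> nat) set" where
  "unary_maps k = base k \<rightarrow>\<^sub>E base k"

definition is_monoid :: "nat \<Rightarrow> (nat \<Rightarrow> nat) set \<Rightarrow> bool" where
  "is_monoid k M \<longleftrightarrow> M \<subseteq> unary_maps k \<and> restrict id (base k) \<in> M \<and>
     (\<forall>f\<in>M. \<forall>g\<in>M. compose (base k) f g \<in> M)"

definition valid_args :: "nat \<Rightarrow> nat \<Rightarrow> nat list \<Rightarrow> bool" where
  "valid_args k n xs \<longleftrightarrow> length xs = n \<and> set xs \<subseteq> base k"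

definition Op :: "nat \<Rightarrow> nat \<Rightarrow> (nat list \<Rightarrow> nat) set" where
  "Op k n = {f. (\<forall>xs. valid_args k n xs \<longrightarrow> f xs \<in> base k) \<and>
                (\<forall>xs. \<not> valid_args k n xs \<longrightarrow> f xs = undefined)}"

definition all_ops :: "nat \<Rightarrow> (nat \<times> (nat list \<Rightarrow> nat)) set" where
  "all_ops k = {(n, f). 1 \<le> n \<and> f \<in> Op k n}"

definition proj :: "nat \<Rightarrow> nat \<Rightarrow> nat \<Rightarrow> (nat list \<Rightarrow> nat)" where
  "proj k n i = (\<lambda>xs. if valid_args k n xs then xs ! i else undefined)"

definition superpos :: "nat \<Rightarrow> nat \<Rightarrow> (nat list \<Rightarrow> nat) \<Rightarrow> nat \<Rightarrow> (nat \<Rightarrow> nat list \<Rightarrow> nat)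
    \<Rightarrow> (nat list \<Rightarrow> nat)" where
  "superpos k m f n g = (\<lambda>xs. if valid_args k n xs then f (map (\<lambda>j. g j xs) [0..<m]) else undefined)"

definition is_clone :: "nat \<Rightarrow> (nat \<times> (nat list \<Rightarrow> nat)) set \<Rightarrow> bool" where
  "is_clone k C \<longleftrightarrow> C \<subseteq> all_ops k \<and>
     (\<forall>n i. 1 \<le> n \<and> i < n \<longrightarrow> (n, proj k n i) \<in> C) \<and>
     (\<forall>m f n g. (m, f) \<in> C \<and> 1 \<le> n \<and> (\<forall>j<m. (n, g j) \<in> C)
          \<longrightarrow> (n, superpos k m f n g) \<in> C)"

text \<open>Translations of an n-ary operation: fix all arguments except the i-th
  to elements of A. For n = 1 this gives just f itself (as a unary map).\<close>
definition trl :: "nat \<Rightarrow> nat \<Rightarrow> (nat list \<Rightarrow> nat) \<Rightarrow> (nat \<Rightarrow> nat) set" where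
  "trl k n f = {(\<lambda>x. if x \<in> base k then f (as[i := x]) else undefined) | i as.
                  i < n \<and> valid_args k n as}"

definition ustar :: "nat \<Rightarrow> (nat \<Rightarrow> nat) set \<Rightarrow> (nat \<times> (nat list \<Rightarrow> nat)) set" where
  "ustar k N = {(n, f). (n, f) \<in> all_ops k \<and> trl k n f \<subseteq> N}"

definition uclosure :: "nat \<Rightarrow> (nat \<Rightarrow> nat) set \<Rightarrow> (nat \<Rightarrow> nat) set" where
  "uclosure k M = \<Inter> {N. M \<subseteq> N \<and> is_monoid k N \<and> is_clone k (ustar k N)}"

end

theory Submission
  imports Defs
begin

text \<open>Since N^* is monotone in N, h lies in N^* for every monoid N \<supseteq> M with N^* a clone,
  so it suffices to put the diagonal of h into each such N. In the clone N^*, identifying the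
  two variables of h gives the unary operation x \<mapsto> h(x,x), and the only translation of a
  unary operation is the operation itself.\<close>

lemma ustar_mono: "N \<subseteq> N' \<Longrightarrow> ustar k N \<subseteq> ustar k N'"
  unfolding ustar_def by blast

lemma subset_uclosure: "M \<subseteq> uclosure k M"
  unfolding uclosure_def by blast

lemma uclosure_least:
  assumes "M \<subseteq> N" "is_monoid k N" "is_clone k (ustar k N)"
  shows "uclosure k M \<subseteq> N"
  unfolding uclosure_def using assms by (intro Inter_lower) simp

lemma uclosureI:
  assumes "\<And>N. M \<subseteq> N \<Longrightarrow> is_monoid k N \<Longrightarrow> is_clone k (ustar k N) \<Longrightarrow> f \<in> N"
  shows "f \<in> uclosure k M"
  unfolding uclosure_def using assms by blast

lemma ustar_unary_mem:
  assumes N: "is_monoid k N" and f: "(1, f) \<in> ustar k N"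
  shows "(\<lambda>x. if x \<in> base k then f [x] else undefined) \<in> N"
proof (cases "base k = {}")
  case True
  \<comment> \<open>There are no translations then, but the only map on the empty set is the identity.\<close>
  have "restrict id (base k) \<in> N" using N by (simp add: is_monoid_def)
  moreover have "restrict id (base k) = (\<lambda>x. if x \<in> base k then f [x] else undefined)"
    using True by auto
  ultimately show ?thesis by simp
next
  case False
  then obtain a where a: "a \<in> base k" by blast
  have "(\<lambda>x. if x \<in> base k then f [x] else undefined) \<in> trl k 1 f"
    unfolding trl_def using a by (auto simp: valid_args_def intro!: exI[of _ "0::nat"] exI[of _ "[a]"])
  moreover have "trl k 1 f \<subseteq> N" using f by (simp add: ustar_def)
  ultimately show ?thesis by blast
qed

lemma clone_identify_binary:
  assumes C: "is_clone k C" and h: "(2, h) \<in> C"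
  obtains g where "(1, g) \<in> C" and "\<And>x. x \<in> base k \<Longrightarrow> g [x] = h [x, x]"
proof
  let ?g = "superpos k 2 h 1 (\<lambda>_. proj k 1 0)"
  have "(1, proj k 1 0) \<in> C" using C by (simp add: is_clone_def)
  with C h show "(1, ?g) \<in> C"
    unfolding is_clone_def by (metis (no_types, lifting) order_refl)
  show "?g [x] = h [x, x]" if "x \<in> base k" for x
    using that by (simp add: superpos_def proj_def valid_args_def numeral_2_eq_2)
qed

lemma diagonal_mem:
  assumes N: "is_monoid k N" "is_clone k (ustar k N)" and h: "(2, h) \<in> ustar k N"
  shows "(\<lambda>x. if x \<in> base k then h [x, x] else undefined) \<in> N"
proof -
  obtain g where g: "(1, g) \<in> ustar k N" and diag: "\<And>x. x \<in> base k \<Longrightarrow> g [x] = h [x, x]"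
    using clone_identify_binary[OF N(2) h] by blast
  have "(\<lambda>x. if x \<in> base k then g [x] else undefined) \<in> N"
    using ustar_unary_mem[OF N(1) g] .
  moreover have "(\<lambda>x. if x \<in> base k then g [x] else undefined)
      = (\<lambda>x. if x \<in> base k then h [x, x] else undefined)"
    using diag by auto
  ultimately show ?thesis by simp
qed

theorem corollary3p10:
  fixes k :: nat and M :: "(nat \<Rightarrow> nat) set" and h :: "nat list \<Rightarrow> nat"
  assumes "is_monoid k M"
    and "(2, h) \<in> ustar k (uclosure k M) \<or> (2, h) \<in> ustar k M"
  shows "(\<lambda>x. if x \<in> base k then h [x, x] else undefined) \<in> uclosure k M"
proof (rule uclosureI)
  fix N assume N: "M \<subseteq> N" "is_monoid k N" "is_clone k (ustar k N)"
  have "ustar k M \<subseteq> ustar k (uclosure k M)"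
    using ustar_mono[OF subset_uclosure] .
  moreover have "ustar k (uclosure k M) \<subseteq> ustar k N"
    using ustar_mono[OF uclosure_least[OF N]] .
  ultimately have "(2, h) \<in> ustar k N" using assms(2) by blast
  then show "(\<lambda>x. if x \<in> base k then h [x, x] else undefined) \<in> N"
    using diagonal_mem[OF N(2,3)] by blast
qed

end
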